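(* Let $q$ be a prime power and $h\geq 2$ an integer. Then for each $t\in\{2,3\}$ there exists a $t$-fold blocking set of size $t(q^h+q^{h-1}+1)$ in $\mathrm{PG}(2,q^h)$.
   Context: $\mathrm{PG}(2,q^h)$ denotes the Desarguesian projective plane over $\mathbb{F}_{q^h}$. A $t$-fold blocking set is a set of points meeting every line in at least $t$ points. *)

theory Defs
  imports "HOL-Computational_Algebra.Primes"
begin

text \<open>A point is a 1-dimensional subspace of F^3 minus zero, represented as the set of all
 nonzero scalar multiples of a nonzero vector.\<close>

definition pg_point :: "'a::field \<times> 'a \<times> 'a \<Rightarrow> ('a \<times> 'a \<times> 'a) set" where
  "pg_point v = {(c * fst v, c * fst (snd v), c * snd (snd v)) | c. c \<noteq> 0}"

definition pg_points :: "('a::field \<times> 'a \<times> 'a) set set" where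
  "pg_points = {pg_point v | v. v \<noteq> (0,0,0)}"

definition pg_line :: "'a::field \<times> 'a \<times> 'a \<Rightarrow> ('a \<times> 'a \<times> 'a) set set" where
  "pg_line u = {P \<in> pg_points. \<forall>(x,y,z)\<in>P.
      fst u * x + fst (snd u) * y + snd (snd u) * z = 0}"

definition pg_lines :: "('a::field \<times> 'a \<times> 'a) set set set" where
  "pg_lines = {pg_line u | u. u \<noteq> (0,0,0)}"

definition t_fold_blocking_set :: "nat \<Rightarrow> ('a::field \<times> 'a \<times> 'a) set set \<Rightarrow> bool" where
  "t_fold_blocking_set t B \<longleftrightarrow>
     B \<subseteq> (pg_points :: ('a \<times> 'a \<times> 'a) set set) \<and>
     (\<forall>L \<in> (pg_lines :: ('a \<times> 'a \<times> 'a) set set set). card (B \<inter> L) \<ge> t)"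

definition prime_power :: "nat \<Rightarrow> bool" where
  "prime_power q \<longleftrightarrow> (\<exists>p k. prime p \<and> k \<ge> 1 \<and> q = p ^ k)"

end

(*
  Let K = GF(q) be the subfield of F = GF(q^h) fixed by x |-> x^q and Tr the trace from F
  to K.  For r outside K, the function f(x) = r Tr(x) + 1 determines at most q^(h-1) + 1
  directions, since (f x - f y) / (x - y) = r Tr(z) / z with z = x - y.  So the affine points
  (x, f x, 1) together with these directions at infinity form a Redei blocking set of at
  most q^h + q^(h-1) + 1 points.

  The collineation rho(x, y, z) = (z, a x, b y) satisfies rho^3 = a b, so it has order three
  on points, and it suffices to choose a = s / w and b = s such that rho maps no point of the
  blocking set into it: then the set and its two images are pairwise disjoint, and the union
  of t of them is a t-fold blocking set, padded with arbitrary points to the exact size.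
  The only delicate case is an affine point sent to an affine point.  Taking traces, with
  Tr(w r) = 0, turns it into the equation k = Tr(w r^2) k sigma(k) + Tr(w) for k = Tr(x) in K,
  where sigma(k) = Tr(1 / (s (r k + 1))).  The nondegeneracy of the trace form gives w1 with
  Tr(w1) = 1, Tr(w1 r) = 0 and beta = Tr(w1 r^2) nonzero; for w = e w1 the equation reads
  k = e (beta k sigma(k) + 1).  Choosing s with beta sigma(1) = -1 rules out k = 1, which
  leaves fewer than |K| values e = k / (beta k sigma(k) + 1) to avoid, so a good e in K exists.
*)
theory Submission
  imports Defs "HOL-Number_Theory.Residues" "HOL-Computational_Algebra.Polynomial"
    "HOL-Library.Disjoint_Sets"
begin

section \<open>Points, lines and multiple blocking sets\<close>

definition smult3 :: "'a::field \<Rightarrow> 'a \<times> 'a \<times> 'a \<Rightarrow> 'a \<times> 'a \<times> 'a" where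
  "smult3 c v = (c * fst v, c * fst (snd v), c * snd (snd v))"

definition inner3 :: "'a::field \<times> 'a \<times> 'a \<Rightarrow> 'a \<times> 'a \<times> 'a \<Rightarrow> 'a" where
  "inner3 u v = fst u * fst v + fst (snd u) * fst (snd v) + snd (snd u) * snd (snd v)"

lemma pg_point_eq_iff: "pg_point v = pg_point w \<longleftrightarrow> (\<exists>c. c \<noteq> 0 \<and> w = smult3 c v)"
proof
  assume "pg_point v = pg_point w"
  moreover have "w \<in> pg_point w"
    unfolding pg_point_def by (rule CollectI, rule exI[of _ 1]) simp
  ultimately show "\<exists>c. c \<noteq> 0 \<and> w = smult3 c v"
    unfolding pg_point_def smult3_def by auto
next
  assume "\<exists>c. c \<noteq> 0 \<and> w = smult3 c v"
  then obtain c where "c \<noteq> 0" "w = smult3 c v" by blast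
  then show "pg_point v = pg_point w"
    unfolding pg_point_def smult3_def
    by (auto simp: mult.assoc) (metis nonzero_divide_eq_eq mult_eq_0_iff)
qed

lemma pg_point_in_pg_points: "v \<noteq> (0, 0, 0) \<Longrightarrow> pg_point v \<in> pg_points"
  unfolding pg_points_def by blast

lemma pg_point_in_pg_line_iff:
  assumes "v \<noteq> (0, 0, 0)"
  shows "pg_point v \<in> pg_line u \<longleftrightarrow> inner3 u v = 0"
proof -
  have "inner3 u (smult3 c v) = c * inner3 u v" for c
    by (simp add: inner3_def smult3_def algebra_simps)
  then have "(\<forall>(x,y,z)\<in>pg_point v. fst u * x + fst (snd u) * y + snd (snd u) * z = 0)
      \<longleftrightarrow> inner3 u v = 0"
    unfolding pg_point_def by (force simp: inner3_def smult3_def)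
  then show ?thesis
    unfolding pg_line_def using pg_point_in_pg_points[OF assms] by blast
qed

lemma card_pg_points_ge:
  fixes n :: nat
  assumes "card (UNIV :: 'a::{field,finite} set) = n"
  shows "n * n + n + 1 \<le> card (pg_points :: ('a \<times> 'a \<times> 'a) set set)"
proof -
  define g :: "('a \<times> 'a) + ('a + unit) \<Rightarrow> ('a \<times> 'a \<times> 'a) set" where
    "g = case_sum (\<lambda>(x, y). pg_point (x, y, 1)) (case_sum (\<lambda>x. pg_point (x, 1, 0)) (\<lambda>_. pg_point (1, 0, 0)))"
  have "inj g"
    by (rule injI) (auto simp: g_def pg_point_eq_iff smult3_def split: sum.splits)
  moreover have "range g \<subseteq> pg_points"
    by (auto simp: g_def intro!: pg_point_in_pg_points split: sum.splits)
  ultimately have "card (UNIV :: (('a \<times> 'a) + ('a + unit)) set) \<le> card (pg_points :: ('a \<times> 'a \<times> 'a) set set)"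
    by (metis card_image card_mono finite)
  then show ?thesis
    using assms by (simp flip: UNIV_Plus_UNIV UNIV_Times_UNIV add: card_Plus card_cartesian_product)
qed

definition vec_blocking :: "('a::field \<times> 'a \<times> 'a) set \<Rightarrow> bool" where
  "vec_blocking V \<longleftrightarrow> (\<forall>u. u \<noteq> (0, 0, 0) \<longrightarrow> (\<exists>v\<in>V. inner3 u v = 0))"

lemma blocking_set_pg_point_image:
  fixes V :: "('a::{field,finite} \<times> 'a \<times> 'a) set"
  assumes "vec_blocking V" "(0, 0, 0) \<notin> V"
  shows "t_fold_blocking_set 1 (pg_point ` V)"
  unfolding t_fold_blocking_set_def
proof (intro conjI ballI)
  show "pg_point ` V \<subseteq> pg_points"
    using assms(2) by (auto intro: pg_point_in_pg_points)
  fix L :: "('a \<times> 'a \<times> 'a) set set"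
  assume "L \<in> pg_lines"
  then obtain u where "u \<noteq> (0, 0, 0)" "L = pg_line u"
    unfolding pg_lines_def by blast
  then obtain v where "v \<in> V" "pg_point v \<in> L"
    using assms pg_point_in_pg_line_iff unfolding vec_blocking_def by metis
  then show "1 \<le> card (pg_point ` V \<inter> L)"
    by (metis card_0_eq disjoint_iff finite imageI less_one not_le)
qed

lemma t_fold_blocking_set_UN:
  fixes P :: "'i \<Rightarrow> ('a::{field,finite} \<times> 'a \<times> 'a) set set"
  assumes "finite I" "disjoint_family_on P I" "\<And>i. i \<in> I \<Longrightarrow> t_fold_blocking_set 1 (P i)"
  shows "t_fold_blocking_set (card I) (\<Union>i\<in>I. P i)"
  unfolding t_fold_blocking_set_def
proof (intro conjI ballI)
  show "(\<Union>i\<in>I. P i) \<subseteq> pg_points"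
    using assms(3) unfolding t_fold_blocking_set_def by blast
  fix L :: "('a \<times> 'a \<times> 'a) set set"
  assume "L \<in> pg_lines"
  then have "\<forall>i\<in>I. \<exists>x. x \<in> P i \<inter> L"
    using assms(3) unfolding t_fold_blocking_set_def by (metis card.empty ex_in_conv not_one_le_zero)
  then obtain x where x: "\<And>i. i \<in> I \<Longrightarrow> x i \<in> P i \<inter> L"
    by metis
  have "inj_on x I"
  proof (rule inj_onI)
    fix i j assume "i \<in> I" "j \<in> I" "x i = x j"
    then show "i = j"
      using x assms(2) unfolding disjoint_family_on_def by (metis IntD1 disjoint_iff)
  qed
  then have "card I = card (x ` I)"
    by (simp add: card_image)
  also have "\<dots> \<le> card ((\<Union>i\<in>I. P i) \<inter> L)"
    using x by (intro card_mono) auto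
  finally show "card I \<le> card ((\<Union>i\<in>I. P i) \<inter> L)" .
qed

lemma ex_t_fold_blocking_set_card:
  fixes B :: "('a::{field,finite} \<times> 'a \<times> 'a) set set"
  assumes B: "t_fold_blocking_set t B" and "card B \<le> n"
    and "n \<le> card (pg_points :: ('a \<times> 'a \<times> 'a) set set)"
  shows "\<exists>B' :: ('a \<times> 'a \<times> 'a) set set. t_fold_blocking_set t B' \<and> card B' = n"
proof -
  have "B \<subseteq> pg_points"
    using B unfolding t_fold_blocking_set_def by blast
  then have "n - card B \<le> card (pg_points - B)"
    using assms by (simp add: card_Diff_subset)
  then obtain C where C: "C \<subseteq> pg_points - B" "card C = n - card B"
    by (meson obtain_subset_with_card_n)
  have "t_fold_blocking_set t (B \<union> C)"
    unfolding t_fold_blocking_set_def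
  proof (intro conjI ballI)
    show "B \<union> C \<subseteq> pg_points"
      using \<open>B \<subseteq> pg_points\<close> C(1) by blast
    fix L :: "('a \<times> 'a \<times> 'a) set set"
    assume "L \<in> pg_lines"
    then have "t \<le> card (B \<inter> L)"
      using B unfolding t_fold_blocking_set_def by blast
    also have "\<dots> \<le> card ((B \<union> C) \<inter> L)"
      by (intro card_mono) auto
    finally show "t \<le> card ((B \<union> C) \<inter> L)" .
  qed
  moreover have "card (B \<union> C) = n"
    using C assms by (subst card_Un_disjoint) auto
  ultimately show ?thesis by blast
qed

section \<open>Redei blocking sets and a projectivity of order three\<close>

definition directions :: "('a::field \<Rightarrow> 'a) \<Rightarrow> 'a set" where
  "directions f = {(f x - f y) / (x - y) | x y. x \<noteq> y}"

definition redei_set :: "('a::field \<Rightarrow> 'a) \<Rightarrow> ('a \<times> 'a \<times> 'a) set" where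
  "redei_set f = (\<lambda>x. (x, f x, 1)) ` UNIV \<union> (\<lambda>m. (1, m, 0)) ` directions f"

lemma zero_notin_redei_set: "(0, 0, 0) \<notin> redei_set f"
  by (auto simp: redei_set_def)

lemma card_redei_set_le:
  fixes f :: "'a::{field,finite} \<Rightarrow> 'a"
  shows "card (redei_set f) \<le> card (UNIV :: 'a set) + card (directions f)"
proof -
  have "card (redei_set f) \<le> card ((\<lambda>x. (x, f x, 1::'a)) ` UNIV) + card ((\<lambda>m. (1::'a, m, 0::'a)) ` directions f)"
    unfolding redei_set_def by (rule card_Un_le)
  also have "\<dots> \<le> card (UNIV :: 'a set) + card (directions f)"
    by (intro add_mono card_image_le) simp_all
  finally show ?thesis .
qed

lemma inj_if_notin_directions:
  assumes "m \<notin> directions f"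
  shows "inj (\<lambda>x. f x - m * x)"
proof (rule injI, rule ccontr)
  fix x y assume "f x - m * x = f y - m * y" "x \<noteq> y"
  then have "m = (f x - f y) / (x - y)"
    by (simp add: field_simps)
  then have "m \<in> directions f"
    unfolding directions_def using \<open>x \<noteq> y\<close> by blast
  with assms show False ..
qed

lemma vec_blocking_redei_set:
  fixes f :: "'a::{field,finite} \<Rightarrow> 'a"
  shows "vec_blocking (redei_set f)"
  unfolding vec_blocking_def
proof (intro allI impI)
  fix u :: "'a \<times> 'a \<times> 'a"
  assume "u \<noteq> (0, 0, 0)"
  obtain \<alpha> \<beta> \<gamma> where u: "u = (\<alpha>, \<beta>, \<gamma>)" by (rule prod_cases3)
  have affine: "(x, f x, 1) \<in> redei_set f" for x
    by (simp add: redei_set_def)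
  have infinite: "(1, m, 0) \<in> redei_set f" if "m \<in> directions f" for m
    using that by (simp add: redei_set_def)
  show "\<exists>v\<in>redei_set f. inner3 u v = 0"
  proof (cases "\<beta> = 0")
    case \<beta>: False
    define m where "m = - \<alpha> / \<beta>"
    show ?thesis
    proof (cases "m \<in> directions f")
      case True
      then show ?thesis
        using infinite[of m] \<beta> by (intro bexI[of _ "(1, m, 0)"]) (simp_all add: u inner3_def m_def)
    next
      case False
      have "inj (\<lambda>x. f x - m * x)"
        using False by (rule inj_if_notin_directions)
      then have "surj (\<lambda>x. f x - m * x)"
        by (simp add: finite_UNIV_inj_surj)
      then obtain x where "- \<gamma> / \<beta> = f x - m * x"
        by (rule surjE)
      then have "\<beta> * f x = - (\<alpha> * x + \<gamma>)"
        using \<beta> by (simp add: m_def field_simps)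
      then have "inner3 u (x, f x, 1) = 0"
        by (simp add: u inner3_def)
      then show ?thesis using affine by blast
    qed
  next
    case \<beta>: True
    show ?thesis
    proof (cases "\<alpha> = 0")
      case False
      then have "inner3 u (- \<gamma> / \<alpha>, f (- \<gamma> / \<alpha>), 1) = 0"
        using \<beta> by (simp add: u inner3_def)
      then show ?thesis using affine by blast
    next
      case True
      have "(f 1 - f 0) / (1 - 0) \<in> directions f"
        unfolding directions_def by (intro CollectI exI[of _ 1] exI[of _ 0]) simp
      then show ?thesis
        using infinite True \<beta> by (intro bexI[of _ "(1, (f 1 - f 0) / (1 - 0), 0)"]) (simp_all add: u inner3_def)
    qed
  qed
qed

definition cycle_map :: "'a::field \<Rightarrow> 'a \<Rightarrow> 'a \<times> 'a \<times> 'a \<Rightarrow> 'a \<times> 'a \<times> 'a" where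
  "cycle_map a b v = (snd (snd v), a * fst v, b * fst (snd v))"

lemma cycle_map_cube: "cycle_map a b (cycle_map a b (cycle_map a b v)) = smult3 (a * b) v"
  by (simp add: cycle_map_def smult3_def mult_ac)

lemma cycle_map_eq_zero_iff:
  "a \<noteq> 0 \<Longrightarrow> b \<noteq> 0 \<Longrightarrow> cycle_map a b v = (0, 0, 0) \<longleftrightarrow> v = (0, 0, 0)"
  by (cases v) (auto simp: cycle_map_def)

lemma pg_point_smult3: "c \<noteq> 0 \<Longrightarrow> pg_point (smult3 c v) = pg_point v"
  unfolding pg_point_eq_iff by (rule exI[of _ "inverse c"]) (cases v, simp add: smult3_def mult.assoc [symmetric])

lemma pg_point_cycle_map_eq_iff:
  assumes "a \<noteq> 0" "b \<noteq> 0"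
  shows "pg_point (cycle_map a b v) = pg_point (cycle_map a b w) \<longleftrightarrow> pg_point v = pg_point w"
proof -
  have "cycle_map a b w = smult3 c (cycle_map a b v) \<longleftrightarrow> w = smult3 c v" for c
    using assms by (cases v, cases w) (auto simp: cycle_map_def smult3_def)
  then show ?thesis by (simp add: pg_point_eq_iff)
qed

lemma vec_blocking_cycle_map:
  assumes "vec_blocking V" "a \<noteq> 0" "b \<noteq> 0"
  shows "vec_blocking (cycle_map a b ` V)"
  unfolding vec_blocking_def
proof (intro allI impI)
  fix u :: "'a \<times> 'a \<times> 'a"
  assume "u \<noteq> (0, 0, 0)"
  obtain \<alpha> \<beta> \<gamma> where u: "u = (\<alpha>, \<beta>, \<gamma>)" by (rule prod_cases3)
  have "inner3 u (cycle_map a b v) = inner3 (\<beta> * a, \<gamma> * b, \<alpha>) v" for v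
    by (simp add: u inner3_def cycle_map_def algebra_simps)
  moreover have "(\<beta> * a, \<gamma> * b, \<alpha>) \<noteq> (0, 0, 0)"
    using \<open>u \<noteq> (0, 0, 0)\<close> assms(2,3) by (auto simp: u)
  ultimately show "\<exists>w\<in>cycle_map a b ` V. inner3 u w = 0"
    using assms(1) unfolding vec_blocking_def by auto
qed

lemma pg_point_cycle_map_iterates_neq:
  assumes a: "a \<noteq> 0" and b: "b \<noteq> 0"
    and no_return: "\<And>v w. v \<in> V \<Longrightarrow> w \<in> V \<Longrightarrow> pg_point (cycle_map a b v) \<noteq> pg_point w"
    and "i < j" "j < 3" "v \<in> V" "w \<in> V"
  shows "pg_point ((cycle_map a b ^^ i) v) \<noteq> pg_point ((cycle_map a b ^^ j) w)"
proof -
  let ?\<rho> = "cycle_map a b"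
  consider "i = 0" "j = 1" | "i = 0" "j = 2" | "i = 1" "j = 2"
    using \<open>i < j\<close> \<open>j < 3\<close> by linarith
  then show ?thesis
  proof cases
    case 1
    then show ?thesis using no_return[of w v] assms(6,7) by auto
  next
    case 2
    show ?thesis
    proof
      assume "pg_point ((?\<rho> ^^ i) v) = pg_point ((?\<rho> ^^ j) w)"
      then have "pg_point (?\<rho> v) = pg_point (?\<rho> (?\<rho> (?\<rho> w)))"
        using 2 pg_point_cycle_map_eq_iff[OF a b] by (simp add: numeral_2_eq_2)
      also have "\<dots> = pg_point w"
        using a b by (simp add: cycle_map_cube pg_point_smult3)
      finally show False
        using no_return assms(6,7) by blast
    qed
  next
    case 3
    have "pg_point (?\<rho> v) \<noteq> pg_point (?\<rho> (?\<rho> w))"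
      using no_return[of w v] assms(6,7) pg_point_cycle_map_eq_iff[OF a b] by simp
    then show ?thesis
      using 3 by (simp add: numeral_2_eq_2)
  qed
qed

lemma t_fold_blocking_set_cycle_orbit:
  fixes V :: "('a::{field,finite} \<times> 'a \<times> 'a) set"
  assumes a: "a \<noteq> 0" and b: "b \<noteq> 0" and V: "vec_blocking V" "(0, 0, 0) \<notin> V" and "t \<le> 3"
    and no_return: "\<And>v w. v \<in> V \<Longrightarrow> w \<in> V \<Longrightarrow> pg_point (cycle_map a b v) \<noteq> pg_point w"
  shows "t_fold_blocking_set t (\<Union>i<t. pg_point ` (cycle_map a b ^^ i) ` V)"
proof -
  let ?\<rho> = "cycle_map a b"
  note separated = pg_point_cycle_map_iterates_neq[OF a b no_return]
  have disjoint: "disjoint_family_on (\<lambda>i. pg_point ` (?\<rho> ^^ i) ` V) {..<t}"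
    unfolding disjoint_family_on_def
  proof (intro ballI impI)
    fix i j assume "i \<in> {..<t}" "j \<in> {..<t}" "i \<noteq> j"
    then have "i < j \<and> j < 3 \<or> j < i \<and> i < 3"
      using \<open>t \<le> 3\<close> by auto
    then show "pg_point ` (?\<rho> ^^ i) ` V \<inter> pg_point ` (?\<rho> ^^ j) ` V = {}"
      using separated by (auto simp: image_iff) (metis)+
  qed
  have iterates: "vec_blocking ((?\<rho> ^^ i) ` V) \<and> (0, 0, 0) \<notin> (?\<rho> ^^ i) ` V" for i
  proof (induction i)
    case (Suc i)
    have "(?\<rho> ^^ Suc i) ` V = ?\<rho> ` (?\<rho> ^^ i) ` V"
      by (simp add: image_comp)
    then show ?case
      using Suc vec_blocking_cycle_map[OF _ a b] cycle_map_eq_zero_iff[OF a b] by (metis imageE)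
  qed (simp add: V)
  have "t_fold_blocking_set (card {..<t}) (\<Union>i<t. pg_point ` (?\<rho> ^^ i) ` V)"
    using disjoint iterates blocking_set_pg_point_image by (intro t_fold_blocking_set_UN) blast+
  then show ?thesis by simp
qed

lemma card_cycle_orbit_le:
  fixes V :: "('a::{field,finite} \<times> 'a \<times> 'a) set"
  shows "card (\<Union>i<t. pg_point ` (cycle_map a b ^^ i) ` V) \<le> t * card V"
proof -
  have "card (\<Union>i<t. pg_point ` (cycle_map a b ^^ i) ` V) \<le> (\<Sum>i<t. card (pg_point ` (cycle_map a b ^^ i) ` V))"
    by (rule card_UN_le) simp
  also have "\<dots> \<le> (\<Sum>i<t. card V)"
    by (intro sum_mono order_trans[OF card_image_le card_image_le]) simp_all
  finally show ?thesis by simp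
qed

section \<open>The trace of a finite field over a subfield\<close>

text \<open>Unlike \<open>finite_field_power_card_eq_same\<close>, this does not require the sort \<open>finite_field\<close>.\<close>
lemma field_power_card_eq_self:
  fixes x :: "'a::{field,finite}"
  shows "x ^ card (UNIV :: 'a set) = x"
proof (cases "x = 0")
  case True
  then show ?thesis by (simp add: finite_UNIV_card_ge_0)
next
  case False
  define G :: "'a monoid" where "G = \<lparr>carrier = UNIV - {0 :: 'a}, monoid.mult = (*), one = 1\<rparr>"
  have "comm_group G"
    by (rule comm_groupI) (auto simp: G_def mult_ac intro!: bexI[of _ "inverse _"])
  then have "x [^]\<^bsub>G\<^esub> card (carrier G) = \<one>\<^bsub>G\<^esub>"
    using False by (intro comm_group.power_order_eq_one) (simp_all add: G_def)
  moreover have "x [^]\<^bsub>G\<^esub> n = x ^ n" for n :: nat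
    by (induction n) (simp_all add: G_def)
  moreover have "card (carrier G) = card (UNIV :: 'a set) - 1"
    by (simp add: G_def card_Diff_singleton)
  ultimately have "x ^ (card (UNIV :: 'a set) - 1) = 1"
    by (simp add: G_def)
  then show ?thesis
    by (metis finite_UNIV_card_ge_0 finite mult.right_neutral power_eq_if neq0_conv)
qed

lemma card_roots_le:
  fixes p :: "'a::idom poly"
  assumes "degree p \<le> n" "coeff p n \<noteq> 0"
  shows "card {x. poly p x = 0} \<le> n"
proof -
  have "p \<noteq> 0" using assms(2) by auto
  then show ?thesis using card_poly_roots_bound[of p] assms(1) by linarith
qed

lemma ex_multiplier_without_fixed_point:
  fixes d :: "'a::field \<Rightarrow> 'a"
  assumes "finite A" "0 \<in> A" "1 \<in> A" "d 0 \<noteq> 0" "d 1 = 0"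
  shows "\<exists>e\<in>A. e \<noteq> 0 \<and> (\<forall>k\<in>A. e * d k \<noteq> k)"
proof -
  define G where "G = (\<lambda>k. k / d k) ` (A - {1})"
  have "card G \<le> card (A - {1})"
    unfolding G_def using assms(1) by (intro card_image_le) simp
  also have "\<dots> < card A"
    using assms(1,3) by (rule card_Diff1_less)
  finally have "card G < card A" .
  moreover have "finite G"
    unfolding G_def using assms(1) by simp
  ultimately obtain e where e: "e \<in> A" "e \<notin> G"
    by (meson card_mono subsetI not_le)
  have "0 \<in> G"
    unfolding G_def using assms(2) by (intro image_eqI[of _ _ 0]) simp_all
  then have "e \<noteq> 0"
    using e(2) by blast
  moreover have "e * d k \<noteq> k" if "k \<in> A" for k
  proof (cases "d k = 0")
    case True
    then show ?thesis using assms(4) by auto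
  next
    case False
    then have "e \<noteq> k / d k"
      using e(2) that assms(5) unfolding G_def by (metis DiffI image_eqI singletonD)
    then show ?thesis
      using False by (simp add: eq_divide_eq)
  qed
  ultimately show ?thesis
    using e(1) by blast
qed

definition frob_fixed :: "nat \<Rightarrow> 'a::field set" where
  "frob_fixed q = {x. x ^ q = x}"

definition trace :: "nat \<Rightarrow> nat \<Rightarrow> 'a::field \<Rightarrow> 'a" where
  "trace q h x = (\<Sum>i<h. x ^ q ^ i)"

locale subfield_trace =
  fixes q h :: nat and field_type :: "'a::{field,finite} itself"
  assumes prime_power_q: "prime_power q" and h_ge_2: "2 \<le> h"
    and card_field: "card (UNIV :: 'a set) = q ^ h"
begin

abbreviation K :: "'a set" where "K \<equiv> frob_fixed q"

abbreviation Tr :: "'a \<Rightarrow> 'a" where "Tr \<equiv> trace q h"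

lemma q_ge_2: "2 \<le> q"
  using prime_power_q unfolding prime_power_def
  by (metis One_nat_def prime_ge_2_nat order_trans power_increasing power_one_right prime_gt_0_nat Suc_leI)

lemma prime_CHAR: "prime CHAR('a)"
  by (simp add: prime_CHAR_semidom finite_imp_CHAR_pos)

lemma power_q_power_eq_CHAR_power: "\<exists>n. q ^ i = CHAR('a) ^ n"
proof -
  obtain p k where p: "prime p" and q: "q = p ^ k"
    using prime_power_q unfolding prime_power_def by blast
  have "CHAR('a) dvd p ^ (k * h)"
    using CHAR_dvd_CARD[where 'a = 'a] by (simp add: card_field q power_mult)
  then have "CHAR('a) = p"
    using p prime_CHAR by (metis prime_dvd_power primes_dvd_imp_eq)
  then show ?thesis
    using q by (metis power_mult)
qed

lemma frobenius_add: "(x + y :: 'a) ^ q ^ i = x ^ q ^ i + y ^ q ^ i"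
  using power_q_power_eq_CHAR_power prime_CHAR freshmans_dream' by blast

lemma frobenius_sum: "(\<Sum>j\<in>A. f j :: 'a) ^ q ^ i = (\<Sum>j\<in>A. f j ^ q ^ i)"
  using power_q_power_eq_CHAR_power prime_CHAR freshmans_dream_sum' by blast

lemma power_q_power_h: "(x :: 'a) ^ q ^ h = x"
  using field_power_card_eq_self[of x] by (simp add: card_field)

lemma frob_fixed_0: "0 \<in> K"
  using q_ge_2 by (simp add: frob_fixed_def)

lemma frob_fixed_1: "1 \<in> K"
  by (simp add: frob_fixed_def)

lemma frob_fixed_uminus:
  assumes "x \<in> K"
  shows "- x \<in> K"
proof -
  have "x ^ q + (- x) ^ q = 0"
    using frobenius_add[of x "- x" 1] q_ge_2 by (simp add: power_0_left)
  then show ?thesis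
    using assms by (simp add: frob_fixed_def add_eq_0_iff)
qed

lemma frob_fixed_divide: "x \<in> K \<Longrightarrow> y \<in> K \<Longrightarrow> x / y \<in> K"
  by (simp add: frob_fixed_def power_divide)

lemma frob_fixed_power_q_power: "c \<in> K \<Longrightarrow> c ^ q ^ i = c"
  by (induction i) (simp_all add: frob_fixed_def power_mult mult.commute[of q])

lemma trace_sum: "Tr (\<Sum>j\<in>A. f j) = (\<Sum>j\<in>A. Tr (f j))"
  unfolding trace_def frobenius_sum by (rule sum.swap)

lemma trace_add: "Tr (x + y) = Tr x + Tr y"
  by (simp add: trace_def frobenius_add sum.distrib)

lemma trace_0: "Tr 0 = 0"
  using q_ge_2 by (simp add: trace_def power_0_left)

lemma trace_diff: "Tr (x - y) = Tr x - Tr y"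
  using trace_add[of "x - y" y] by simp

lemma trace_smult: "c \<in> K \<Longrightarrow> Tr (c * x) = c * Tr x"
  by (simp add: trace_def power_mult_distrib frob_fixed_power_q_power sum_distrib_left)

lemma trace_in_frob_fixed: "Tr x \<in> K"
proof -
  have "Tr x ^ q = (\<Sum>i<h. (x ^ q ^ i) ^ q)"
    unfolding trace_def using frobenius_sum[of "\<lambda>i. x ^ q ^ i" "{..<h}" 1] by simp
  also have "\<dots> = (\<Sum>i<h. x ^ q ^ Suc i)"
    by (simp add: power_mult[symmetric] mult.commute[of q])
  also have "\<dots> = Tr x"
    using sum.lessThan_Suc_shift[of "\<lambda>i. x ^ q ^ i" h] power_q_power_h[of x]
    by (simp add: trace_def)
  finally show ?thesis
    by (simp add: frob_fixed_def)
qed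

lemma card_trace_fiber_le: "card {x. Tr x = c} \<le> q ^ (h - 1)"
proof -
  define P :: "'a poly" where "P = (\<Sum>i<h. monom 1 (q ^ i)) - [:c:]"
  have "q ^ i \<le> q ^ (h - 1)" if "i < h" for i
    using that q_ge_2 by (intro power_increasing) auto
  then have "degree (\<Sum>i<h. monom (1::'a) (q ^ i)) \<le> q ^ (h - 1)"
    by (intro degree_sum_le) (auto intro: order_trans[OF degree_monom_le])
  then have "degree P \<le> q ^ (h - 1)"
    unfolding P_def by (intro degree_diff_le) simp_all
  moreover have "coeff P (q ^ (h - 1)) = 1"
  proof -
    have "q ^ i = q ^ (h - 1) \<longleftrightarrow> i = h - 1" for i
      using q_ge_2 by (intro power_inject_exp) simp
    moreover have "q ^ (h - 1) \<noteq> 0" using q_ge_2 by simp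
    ultimately show ?thesis
      using h_ge_2 by (simp add: P_def coeff_sum coeff_pCons split: nat.split)
  qed
  moreover have "{x. Tr x = c} = {x. poly P x = 0}"
    by (simp add: P_def poly_sum poly_monom trace_def)
  ultimately show ?thesis
    using card_roots_le[of P "q ^ (h - 1)"] by simp
qed

lemma ex_notin_frob_fixed: "\<exists>r. r \<notin> K"
proof -
  define P :: "'a poly" where "P = monom 1 q - [:0, 1:]"
  have "degree P \<le> q"
    using q_ge_2 unfolding P_def by (intro degree_diff_le) (simp_all add: degree_monom_eq)
  moreover have "coeff P q = 1"
    using q_ge_2 by (simp add: P_def coeff_pCons split: nat.split)
  moreover have "K = {x. poly P x = 0}"
    by (simp add: P_def poly_monom frob_fixed_def)
  ultimately have "card K \<le> q"
    using card_roots_le[of P q] by simp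
  moreover have "q ^ 1 < q ^ h"
    using q_ge_2 h_ge_2 by (intro power_strict_increasing) auto
  ultimately have "K \<noteq> UNIV"
    using card_field by auto
  then show ?thesis by blast
qed

lemma ex_trace_nonzero: "\<exists>x. Tr x \<noteq> 0"
proof -
  have "q ^ (h - 1) < q ^ h"
    using q_ge_2 h_ge_2 by (intro power_strict_increasing) auto
  then have "{x. Tr x = 0} \<noteq> UNIV"
    using card_trace_fiber_le[of 0] card_field by auto
  then show ?thesis by blast
qed

lemma trace_surj:
  assumes "c \<in> K"
  shows "\<exists>x. Tr x = c"
proof -
  obtain x where x: "Tr x \<noteq> 0" using ex_trace_nonzero by blast
  have "Tr ((c / Tr x) * x) = (c / Tr x) * Tr x"
    by (intro trace_smult frob_fixed_divide assms trace_in_frob_fixed)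
  then have "Tr ((c / Tr x) * x) = c"
    using x by simp
  then show ?thesis by blast
qed

lemma trace_form_nondegenerate:
  assumes "\<And>w. Tr (w * z) = 0"
  shows "z = 0"
proof (rule ccontr)
  assume "z \<noteq> 0"
  obtain x where "Tr x \<noteq> 0" using ex_trace_nonzero by blast
  moreover have "Tr (x / z * z) = 0" by (rule assms)
  ultimately show False using \<open>z \<noteq> 0\<close> by simp
qed

lemma trace_smult_sum:
  "Tr (\<Sum>a\<in>A. Tr (f a) * g a) = (\<Sum>a\<in>A. Tr (f a) * Tr (g a))"
  by (simp add: trace_sum trace_smult trace_in_frob_fixed)

lemma trace_annihilator_in_span:
  assumes "finite A"
    and dual: "\<And>a a'. a \<in> A \<Longrightarrow> a' \<in> A \<Longrightarrow> Tr (d a * a') = (if a = a' then 1 else 0)"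
    and annihilates: "\<And>u. (\<And>a. a \<in> A \<Longrightarrow> Tr (u * a) = 0) \<Longrightarrow> Tr (u * b) = 0"
  shows "b = (\<Sum>a\<in>A. Tr (d a * b) * a)"
proof -
  have "Tr (w * (b - (\<Sum>a\<in>A. Tr (d a * b) * a))) = 0" for w
  proof -
    define u where "u = w - (\<Sum>a\<in>A. Tr (w * a) * d a)"
    have u_times: "Tr (u * x) = Tr (w * x) - (\<Sum>a\<in>A. Tr (w * a) * Tr (d a * x))" for x
    proof -
      have "u * x = w * x - (\<Sum>a\<in>A. Tr (w * a) * (d a * x))"
        unfolding u_def by (simp add: left_diff_distrib sum_distrib_right mult.assoc)
      then show ?thesis
        by (simp add: trace_diff trace_smult_sum)
    qed
    have "Tr (u * a') = 0" if "a' \<in> A" for a'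
      using that assms(1) by (simp add: u_times dual if_distrib cong: if_cong)
    then have "Tr (u * b) = 0"
      by (rule annihilates)
    then have "Tr (w * b) = (\<Sum>a\<in>A. Tr (w * a) * Tr (d a * b))"
      by (simp add: u_times)
    also have "\<dots> = (\<Sum>a\<in>A. Tr (d a * b) * Tr (w * a))"
      by (intro sum.cong refl) (rule mult.commute)
    also have "\<dots> = Tr (\<Sum>a\<in>A. Tr (d a * b) * (w * a))"
      by (simp add: trace_smult_sum)
    also have "\<dots> = Tr (w * (\<Sum>a\<in>A. Tr (d a * b) * a))"
      by (simp add: sum_distrib_left mult.left_commute)
    finally show ?thesis
      by (simp add: right_diff_distrib trace_diff)
  qed
  then show ?thesis
    using trace_form_nondegenerate by fastforce
qed

lemma ex_trace_dual_1_r: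
  assumes "r \<notin> K"
  obtains w0 w1 where "Tr w0 = 1" "Tr (w0 * r) = 0" "Tr w1 = 0" "Tr (w1 * r) = 1"
proof -
  obtain w where w: "Tr w = 1"
    using trace_surj frob_fixed_1 by blast
  have "\<exists>u. Tr u = 0 \<and> Tr (u * r) \<noteq> 0"
  proof (rule ccontr)
    assume "\<not> ?thesis"
    then have "r = (\<Sum>a\<in>{1}. Tr ((\<lambda>_. w) a * r) * a)"
      by (intro trace_annihilator_in_span) (auto simp: w)
    then have "r = Tr (w * r)"
      by simp
    then have "r \<in> K"
      using trace_in_frob_fixed by metis
    with assms show False ..
  qed
  then obtain u where u: "Tr u = 0" "Tr (u * r) \<noteq> 0"
    by blast
  define w1 where "w1 = (1 / Tr (u * r)) * u"
  have "1 / Tr (u * r) \<in> K"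
    by (intro frob_fixed_divide frob_fixed_1 trace_in_frob_fixed)
  then have "Tr w1 = (1 / Tr (u * r)) * Tr u" "Tr (w1 * r) = (1 / Tr (u * r)) * Tr (u * r)"
    unfolding w1_def mult.assoc by (simp_all only: trace_smult)
  then have w1: "Tr w1 = 0" "Tr (w1 * r) = 1"
    using u by simp_all
  define w0 where "w0 = w - Tr (w * r) * w1"
  have "Tr w0 = Tr w - Tr (w * r) * Tr w1"
    unfolding w0_def by (simp only: trace_diff trace_smult[OF trace_in_frob_fixed])
  moreover have "Tr (w0 * r) = Tr (w * r) - Tr (w * r) * Tr (w1 * r)"
    unfolding w0_def left_diff_distrib mult.assoc by (simp only: trace_diff trace_smult[OF trace_in_frob_fixed])
  ultimately show thesis
    using that[of w0 w1] w w1 by simp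
qed

lemma ex_trace_square_nonzero:
  assumes "r \<notin> K"
  obtains w where "Tr w = 1" "Tr (w * r) = 0" "Tr (w * r\<^sup>2) \<noteq> 0"
proof -
  obtain w0 w1 where w0: "Tr w0 = 1" "Tr (w0 * r) = 0" and w1: "Tr w1 = 0" "Tr (w1 * r) = 1"
    using ex_trace_dual_1_r[OF assms] .
  have r: "r \<noteq> 0" "r \<noteq> 1"
    using assms frob_fixed_0 frob_fixed_1 by auto
  have "\<exists>u. Tr u = 0 \<and> Tr (u * r) = 0 \<and> Tr ((w0 + u) * r\<^sup>2) \<noteq> 0"
  proof (rule ccontr)
    assume "\<not> ?thesis"
    then have kernel: "Tr (w0 * r\<^sup>2) + Tr (u * r\<^sup>2) = 0" if "Tr u = 0" "Tr (u * r) = 0" for u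
      using that by (auto simp: distrib_right trace_add)
    then have w0_r2: "Tr (w0 * r\<^sup>2) = 0"
      using kernel[of 0] by (simp add: trace_0)
    have "Tr (u * r\<^sup>2) = 0" if "\<And>a. a \<in> {1, r} \<Longrightarrow> Tr (u * a) = 0" for u
      using that[of 1] that[of r] kernel w0_r2 by simp
    \<comment> \<open>so \<open>r\<^sup>2\<close> would be a \<open>K\<close>-multiple of \<open>r\<close>, forcing \<open>r \<in> K\<close>\<close>
    then have "r\<^sup>2 = (\<Sum>a\<in>{1, r}. Tr ((\<lambda>a. if a = 1 then w0 else w1) a * r\<^sup>2) * a)"
      using w0 w1 r by (intro trace_annihilator_in_span) auto
    then have "r * r = Tr (w1 * r\<^sup>2) * r"
      using r w0_r2 by (simp add: power2_eq_square)
    then have "r = Tr (w1 * r\<^sup>2)"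
      using r by simp
    then show False
      using assms trace_in_frob_fixed by metis
  qed
  then obtain u where "Tr u = 0" "Tr (u * r) = 0" "Tr ((w0 + u) * r\<^sup>2) \<noteq> 0"
    by blast
  then show thesis
    using that[of "w0 + u"] w0 by (simp add: distrib_right trace_add)
qed

section \<open>Three disjoint Redei blocking sets\<close>

lemma directions_trace_affine:
  "directions (\<lambda>x. r * Tr x + c) = {r * Tr z / z | z. z \<noteq> 0}"
proof -
  have slope: "(r * Tr x + c - (r * Tr y + c)) / (x - y) = r * Tr (x - y) / (x - y)" for x y
    by (simp add: trace_diff right_diff_distrib)
  show ?thesis
  proof (intro equalityI subsetI)
    fix m assume "m \<in> directions (\<lambda>x. r * Tr x + c)"
    then obtain x y where "x \<noteq> y" "m = (r * Tr x + c - (r * Tr y + c)) / (x - y)"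
      unfolding directions_def by blast
    then show "m \<in> {r * Tr z / z | z. z \<noteq> 0}"
      unfolding slope by auto
  next
    fix m assume "m \<in> {r * Tr z / z | z. z \<noteq> 0}"
    then obtain z where "z \<noteq> 0" "m = (r * Tr z + c - (r * Tr 0 + c)) / (z - 0)"
      by (auto simp: trace_0)
    then show "m \<in> directions (\<lambda>x. r * Tr x + c)"
      unfolding directions_def by blast
  qed
qed

lemma card_directions_trace_affine:
  "card (directions (\<lambda>x. r * Tr x + c)) \<le> q ^ (h - 1) + 1"
proof -
  have "directions (\<lambda>x. r * Tr x + c) \<subseteq> insert 0 ((\<lambda>y. r / y) ` {y. Tr y = 1})"
  proof
    fix m assume "m \<in> directions (\<lambda>x. r * Tr x + c)"
    then obtain z where z: "z \<noteq> 0" "m = r * Tr z / z"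
      by (auto simp: directions_trace_affine)
    show "m \<in> insert 0 ((\<lambda>y. r / y) ` {y. Tr y = 1})"
    proof (cases "Tr z = 0")
      case False
      have "Tr ((1 / Tr z) * z) = (1 / Tr z) * Tr z"
        by (intro trace_smult frob_fixed_divide frob_fixed_1 trace_in_frob_fixed)
      moreover have "m = r / ((1 / Tr z) * z)"
        using z False by simp
      ultimately show ?thesis
        using False by (intro insertI2 image_eqI[where x = "(1 / Tr z) * z"]) simp_all
    qed (use z in simp)
  qed
  then have "card (directions (\<lambda>x. r * Tr x + c)) \<le> card (insert 0 ((\<lambda>y. r / y) ` {y. Tr y = 1}))"
    by (intro card_mono) simp_all
  also have "\<dots> \<le> card ((\<lambda>y. r / y) ` {y. Tr y = 1}) + 1"
    by (simp add: card_insert_if)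
  also have "\<dots> \<le> card {y. Tr y = 1} + 1"
    by (simp add: card_image_le)
  also have "\<dots> \<le> q ^ (h - 1) + 1"
    using card_trace_fiber_le by simp
  finally show ?thesis .
qed

lemma trace_affine_nonzero:
  assumes "r \<notin> K"
  shows "r * Tr x + 1 \<noteq> 0"
proof
  assume "r * Tr x + 1 = 0"
  then have "r * Tr x = - 1"
    by (simp add: eq_neg_iff_add_eq_0)
  moreover have "Tr x \<noteq> 0"
    using \<open>r * Tr x = - 1\<close> by auto
  ultimately have "r = - 1 / Tr x"
    by (simp add: field_simps)
  moreover have "- 1 / Tr x \<in> K"
    by (intro frob_fixed_divide frob_fixed_uminus frob_fixed_1 trace_in_frob_fixed)
  ultimately show False
    using assms by simp
qed

lemma inverse_notin_directions_trace_affine: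
  assumes "w \<noteq> 0" and "Tr (w * r) = 0"
  shows "1 / w \<notin> directions (\<lambda>x. r * Tr x + c)"
proof
  assume "1 / w \<in> directions (\<lambda>x. r * Tr x + c)"
  then obtain z where z: "z \<noteq> 0" "r * Tr z / z = 1 / w"
    by (auto simp: directions_trace_affine)
  then have "z = Tr z * (w * r)"
    using \<open>w \<noteq> 0\<close> by (simp add: field_simps)
  then have "Tr z = Tr z * Tr (w * r)"
    by (metis trace_smult trace_in_frob_fixed)
  then show False
    using z \<open>z = Tr z * (w * r)\<close> assms by simp
qed

lemma trace_eq_if_cycle_map_affine:
  fixes s w r :: 'a
  defines "f \<equiv> \<lambda>x. r * Tr x + 1"
  assumes r: "r \<notin> K" and s: "s \<noteq> 0" and w: "w \<noteq> 0" and wr: "Tr (w * r) = 0"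
    and eq: "(x', f x', 1) = smult3 c (cycle_map (s / w) s (x, f x, 1))"
  shows "Tr x = Tr (w * r\<^sup>2) * Tr x * Tr (1 / (s * (r * Tr x + 1))) + Tr w"
proof -
  have "(x', f x', 1) = (c * 1, c * (s / w * x), c * (s * f x))"
    using eq by (simp only: smult3_def cycle_map_def fst_conv snd_conv)
  then have "x' = c" "f x' = c * (s / w * x)" "1 = c * (s * f x)"
    by auto
  then have x': "x' = 1 / (s * f x)"
    using s trace_affine_nonzero[OF r] by (simp add: f_def eq_divide_eq)
  have "x = (c * (s * f x)) * x"
    using \<open>1 = c * (s * f x)\<close> by simp
  also have "\<dots> = w * f x * f x'"
    using \<open>f x' = c * (s / w * x)\<close> w by (simp add: field_simps)
  also have "\<dots> = (Tr x * Tr x') * (w * r\<^sup>2) + (Tr x + Tr x') * (w * r) + w"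
    by (simp add: f_def algebra_simps power2_eq_square)
  finally have "Tr x = (Tr x * Tr x') * Tr (w * r\<^sup>2) + (Tr x + Tr x') * Tr (w * r) + Tr w"
    by (metis trace_add trace_smult trace_in_frob_fixed)
  then show ?thesis
    using wr x' by (simp add: f_def mult_ac)
qed

lemma cycle_map_redei_trace_no_return:
  fixes s w r :: 'a
  defines "f \<equiv> \<lambda>x. r * Tr x + 1"
  assumes r: "r \<notin> K" and s: "s \<noteq> 0" and w: "w \<noteq> 0" and wr: "Tr (w * r) = 0"
    and avoid: "\<And>k. k \<in> K \<Longrightarrow> Tr (w * r\<^sup>2) * k * Tr (1 / (s * (r * k + 1))) + Tr w \<noteq> k"
    and v: "v \<in> redei_set f" and v': "v' \<in> redei_set f"
  shows "pg_point (cycle_map (s / w) s v) \<noteq> pg_point v'"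
proof
  assume "pg_point (cycle_map (s / w) s v) = pg_point v'"
  then obtain c where c: "c \<noteq> 0" "v' = smult3 c (cycle_map (s / w) s v)"
    by (auto simp: pg_point_eq_iff)
  have f_nonzero: "f x \<noteq> 0" for x
    unfolding f_def using trace_affine_nonzero[OF r] .
  from v consider (affine) x where "v = (x, f x, 1)" | (infinite) m where "v = (1, m, 0)" "m \<in> directions f"
    unfolding redei_set_def by blast
  then show False
  proof cases
    case affine
    from v' consider (affine') x' where "v' = (x', f x', 1)" | (infinite') m' where "v' = (1, m', 0)"
      unfolding redei_set_def by blast
    then show False
    proof cases
      case affine'
      have "(x', f x', 1) = smult3 c (cycle_map (s / w) s (x, f x, 1))"
        using c affine affine' by simp
      then have "Tr x = Tr (w * r\<^sup>2) * Tr x * Tr (1 / (s * (r * Tr x + 1))) + Tr w"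
        unfolding f_def by (rule trace_eq_if_cycle_map_affine[OF r s w wr])
      then show False
        using avoid[OF trace_in_frob_fixed] by metis
    next
      case infinite'
      then show False
        using c affine s f_nonzero[of x] by (simp add: smult3_def cycle_map_def)
    qed
  next
    case infinite
    from v' consider (affine') x' where "v' = (x', f x', 1)" | (infinite') m' where "v' = (1, m', 0)"
      unfolding redei_set_def by blast
    then show False
    proof cases
      case affine'
      then have "x' = 0" "f x' = c * (s / w)" "1 = c * (s * m)"
        using c infinite by (simp_all add: smult3_def cycle_map_def)
      then have "m = 1 / w"
        using s w by (simp add: f_def trace_0 field_simps) (metis mult.left_commute)
      then show False
        using infinite inverse_notin_directions_trace_affine[OF w wr] by (simp add: f_def)
    next
      case infinite'
      then show False
        using c infinite by (simp add: smult3_def cycle_map_def)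
    qed
  qed
qed

lemma ex_no_return_parameters:
  obtains r s w :: 'a where "r \<notin> K" "s \<noteq> 0" "w \<noteq> 0" "Tr (w * r) = 0"
    "\<And>k. k \<in> K \<Longrightarrow> Tr (w * r\<^sup>2) * k * Tr (1 / (s * (r * k + 1))) + Tr w \<noteq> k"
proof -
  obtain r where r: "r \<notin> K"
    using ex_notin_frob_fixed by blast
  obtain w1 where w1: "Tr w1 = 1" "Tr (w1 * r) = 0" "Tr (w1 * r\<^sup>2) \<noteq> 0"
    using ex_trace_square_nonzero[OF r] by blast
  define \<beta> where "\<beta> = Tr (w1 * r\<^sup>2)"
  have "- (1 / \<beta>) \<in> K"
    unfolding \<beta>_def by (intro frob_fixed_uminus frob_fixed_divide frob_fixed_1 trace_in_frob_fixed)
  then obtain y where y: "Tr y = - (1 / \<beta>)"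
    using trace_surj by blast
  have "y \<noteq> 0" "r + 1 \<noteq> 0"
    using y w1(3) trace_affine_nonzero[OF r, of w1] by (auto simp: \<beta>_def trace_0 w1(1))
  \<comment> \<open>\<open>s\<close> is chosen to make the denominator \<open>d\<close> below vanish at \<open>k = 1\<close>\<close>
  define s where "s = 1 / ((r + 1) * y)"
  define d where "d k = \<beta> * k * Tr (1 / (s * (r * k + 1))) + 1" for k
  have "d 1 = 0"
    using y w1(3) \<open>y \<noteq> 0\<close> \<open>r + 1 \<noteq> 0\<close> by (simp add: d_def s_def \<beta>_def)
  then obtain e where e: "e \<in> K" "e \<noteq> 0" and no_fixed: "\<And>k. k \<in> K \<Longrightarrow> e * d k \<noteq> k"
    using ex_multiplier_without_fixed_point[of K d] frob_fixed_0 frob_fixed_1 by (auto simp: d_def)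
  define w where "w = e * w1"
  have w: "Tr w = e" "Tr (w * r) = 0" "Tr (w * r\<^sup>2) = e * \<beta>"
    using w1 by (simp_all add: w_def trace_smult[OF e(1)] \<beta>_def mult.assoc)
  show thesis
  proof (rule that[OF r])
    show "s \<noteq> 0" "w \<noteq> 0"
      using \<open>y \<noteq> 0\<close> \<open>r + 1 \<noteq> 0\<close> \<open>e \<noteq> 0\<close> w1(1) by (auto simp: s_def w_def trace_0)
    show "Tr (w * r) = 0" by (fact w(2))
    fix k assume "k \<in> K"
    moreover have "Tr (w * r\<^sup>2) * k * Tr (1 / (s * (r * k + 1))) + Tr w = e * d k"
      by (simp add: w d_def algebra_simps)
    ultimately show "Tr (w * r\<^sup>2) * k * Tr (1 / (s * (r * k + 1))) + Tr w \<noteq> k"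
      using no_fixed by simp
  qed
qed

end

lemma three_mul_redei_bound_le_num_points:
  fixes q h :: nat
  assumes "2 \<le> q" "2 \<le> h"
  shows "3 * (q ^ h + q ^ (h - 1) + 1) \<le> q ^ h * q ^ h + q ^ h + 1"
proof -
  define a where "a = q ^ (h - 1)"
  define Q where "Q = q ^ h"
  have "Q = q * a"
    unfolding a_def Q_def using assms(2) by (metis Suc_diff_1 less_le_trans numeral_2_eq_2 pos2 power_Suc)
  moreover have "q ^ 1 \<le> a"
    unfolding a_def using assms by (intro power_increasing) auto
  ultimately have "2 \<le> a" "2 * a \<le> Q"
    using assms(1) by simp_all
  then have "4 * Q \<le> Q * Q"
    by (intro mult_right_mono) simp_all
  with \<open>2 \<le> a\<close> \<open>2 * a \<le> Q\<close> have "3 * (Q + a + 1) \<le> Q * Q + Q + 1"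
    by arith
  then show ?thesis
    unfolding a_def Q_def .
qed

theorem theorem1p3:
  fixes q h t :: nat
  assumes "prime_power q"
    and "h \<ge> 2"
    and "card (UNIV :: 'a::{field,finite} set) = q ^ h"
    and "t \<in> {2, 3}"
  shows "\<exists>B :: ('a \<times> 'a \<times> 'a) set set.
           t_fold_blocking_set t B \<and> card B = t * (q ^ h + q ^ (h - 1) + 1)"
proof -
  interpret subfield_trace q h "TYPE('a)"
    using assms(1-3) by unfold_locales
  obtain r s w :: 'a where r: "r \<notin> K" and s: "s \<noteq> 0" and w: "w \<noteq> 0" and wr: "Tr (w * r) = 0"
    and avoid: "\<And>k. k \<in> K \<Longrightarrow> Tr (w * r\<^sup>2) * k * Tr (1 / (s * (r * k + 1))) + Tr w \<noteq> k"
    using ex_no_return_parameters by blast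
  define V where "V = redei_set (\<lambda>x. r * Tr x + 1)"
  define B where "B = (\<Union>i<t. pg_point ` (cycle_map (s / w) s ^^ i) ` V)"
  have blocking: "t_fold_blocking_set t B"
    unfolding B_def V_def using assms(4) s w cycle_map_redei_trace_no_return[OF r s w wr avoid]
    by (intro t_fold_blocking_set_cycle_orbit vec_blocking_redei_set zero_notin_redei_set) auto
  have "card V \<le> q ^ h + q ^ (h - 1) + 1"
    using card_redei_set_le[of "\<lambda>x. r * Tr x + 1"] card_directions_trace_affine[of r 1] assms(3)
    unfolding V_def by linarith
  then have card_B: "card B \<le> t * (q ^ h + q ^ (h - 1) + 1)"
    unfolding B_def by (rule order_trans[OF card_cycle_orbit_le mult_le_mono2])
  have "t * (q ^ h + q ^ (h - 1) + 1) \<le> 3 * (q ^ h + q ^ (h - 1) + 1)"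
    using assms(4) by auto
  also have "\<dots> \<le> q ^ h * q ^ h + q ^ h + 1"
    by (rule three_mul_redei_bound_le_num_points[OF q_ge_2 assms(2)])
  also have "\<dots> \<le> card (pg_points :: ('a \<times> 'a \<times> 'a) set set)"
    by (rule card_pg_points_ge[OF assms(3)])
  finally have "t * (q ^ h + q ^ (h - 1) + 1) \<le> card (pg_points :: ('a \<times> 'a \<times> 'a) set set)" .
  with blocking card_B show ?thesis
    by (rule ex_t_fold_blocking_set_card)
qed

end
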